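(* Let $F\subseteq\mathbb{R}^2$ be self-homothetic, generated by an IFS $\Phi$ with uniform contraction ratio $\lambda$ and the SSC, and not contained in an affine line. Suppose that $\gamma\cdot(P_1(F),0)+t\subseteq F$ for some $\gamma>0$, $t\in\mathbb{R}^2$. Then the projected IFS $P_1\Phi$ has the weak separation condition.
   Context: Self-homothetic: $\Phi=\{\phi_i(z)=\lambda z+t_i\}$. SSC: $\phi_i(F)$ pairwise disjoint. $P_1(x,y)=x$; $(A,0)=\{(a,0):a\in A\}$. $P_1\Phi=\{x\mapsto\lambda x+P_1(t_i)\}$, an IFS on $\mathbb{R}$ with attractor $P_1(F)$. WSC: $\mathrm{Id}\notin\overline{\{\psi_I^{-1}\circ\psi_J: I\ne J\}\setminus\{\mathrm{Id}\}}$, closure with respect to pointwise convergence on the group of similarities of $\mathbb{R}$. *)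

theory Defs
  imports "HOL-Analysis.Analysis"
begin

definition hom_map :: "real \<Rightarrow> 'a::real_vector \<Rightarrow> 'a \<Rightarrow> 'a" where
  "hom_map lam t z = lam *\<^sub>R z + t"

definition word_map :: "real \<Rightarrow> ('i \<Rightarrow> 'a::real_vector) \<Rightarrow> 'i list \<Rightarrow> 'a \<Rightarrow> 'a" where
  "word_map lam t w = foldr (\<lambda>i f. hom_map lam (t i) \<circ> f) w id"

definition is_attractor :: "real \<Rightarrow> ('i \<Rightarrow> 'a::real_normed_vector) \<Rightarrow> 'i set \<Rightarrow> 'a set \<Rightarrow> bool" where
  "is_attractor lam t I F \<longleftrightarrow> compact F \<and> F \<noteq> {} \<and> F = (\<Union>i\<in>I. hom_map lam (t i) ` F)"

definition SSC :: "real \<Rightarrow> ('i \<Rightarrow> 'a::real_vector) \<Rightarrow> 'i set \<Rightarrow> 'a set \<Rightarrow> bool" where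
  "SSC lam t I F \<longleftrightarrow> (\<forall>i\<in>I. \<forall>j\<in>I. i \<noteq> j \<longrightarrow> hom_map lam (t i) ` F \<inter> hom_map lam (t j) ` F = {})"

text \<open>Weak separation condition for a homothetic IFS on the real line; the closure is taken
  in the topology of pointwise convergence (product topology on real \<Rightarrow> real). Since the
  identity lies in the group of similarities, the closure relative to that group contains id
  iff the closure in the full function space does.\<close>
definition WSC :: "real \<Rightarrow> ('i \<Rightarrow> real) \<Rightarrow> 'i set \<Rightarrow> bool" where
  "WSC lam t I \<longleftrightarrow>
     id \<notin> closure ({inv (word_map lam t u) \<circ> word_map lam t v | u v.
                      u \<in> lists I \<and> v \<in> lists I \<and> u \<noteq> v} - {id})"

end

theory Submission
  imports Defs
begin

text \<open>Suppose the projected IFS fails the weak separation condition. Then there are words \<open>u\<close>, \<open>v\<close>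
  with \<open>\<psi>\<^sub>v(x) = \<psi>\<^sub>u(x + c)\<close> for arbitrarily small \<open>c > 0\<close>; combining such pairs with the
  invariance of \<open>P\<^sub>1(F)\<close> under all word maps, \<open>P\<^sub>1(F)\<close> contains, at arbitrarily small
  scales \<open>r\<close>, arbitrarily long chains whose consecutive gaps lie in \<open>[\<lambda> r, r]\<close>.
  The copy \<open>\<gamma>\<cdot>(P\<^sub>1(F), 0) + t\<close> carries these chains into \<open>F\<close>. But by the strong separation
  condition, a chain in \<open>F\<close> with steps at most \<open>\<rho>\<close> (\<open>\<rho>\<close> below the separation \<open>d\<close> of the first-level
  pieces) stays in a single cylinder of diameter at most \<open>(\<rho>/d) diam F\<close>, while a chain of \<open>N\<close> gaps
  of size at least \<open>\<lambda>\<rho>\<close> spans \<open>N\<lambda>\<rho>\<close>; this bounds \<open>N\<close>.\<close>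

section \<open>Word maps\<close>

lemma word_map_Nil [simp]: "word_map lam t [] x = x"
  by (simp add: word_map_def)

lemma word_map_Cons [simp]: "word_map lam t (i # w) x = lam *\<^sub>R word_map lam t w x + t i"
  by (simp add: word_map_def hom_map_def)

lemma word_map_append: "word_map lam t (u @ w) = word_map lam t u \<circ> word_map lam t w"
  by (induction u) (auto simp: fun_eq_iff)

lemma word_map_affine: "word_map lam t w x = lam ^ length w *\<^sub>R x + word_map lam t w 0"
  by (induction w) (auto simp: algebra_simps)

lemma word_map_real: "word_map lam (b :: 'i \<Rightarrow> real) w x = lam ^ length w * x + word_map lam b w 0"
  using word_map_affine[of lam b w x] by simp

lemma word_map_real_add:
  "word_map lam (b :: 'i \<Rightarrow> real) u (z + c) = word_map lam b u z + lam ^ length u * c"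
  unfolding word_map_real[of lam b u "z + c"] word_map_real[of lam b u z]
  by (simp add: algebra_simps)

lemma fst_word_map: "fst (word_map lam t w z) = word_map lam (\<lambda>i. fst (t i)) w (fst z)"
  by (induction w) auto

lemma inv_word_map_word_map_real:
  fixes b :: "'i \<Rightarrow> real"
  assumes "lam \<noteq> 0"
  shows "inv (word_map lam b u) (word_map lam b v x)
           = (lam ^ length v * x + word_map lam b v 0 - word_map lam b u 0) / lam ^ length u"
proof -
  define au av where "au = word_map lam b u 0" and "av = word_map lam b v 0"
  have Wu: "word_map lam b u y = lam ^ length u * y + au" for y
    unfolding au_def by (rule word_map_real)
  have Wv: "word_map lam b v y = lam ^ length v * y + av" for y
    unfolding av_def by (rule word_map_real)
  have "inj (word_map lam b u)"
    using assms by (auto simp: inj_def Wu)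
  moreover have "word_map lam b u ((lam ^ length v * x + av - au) / lam ^ length u)
                   = word_map lam b v x"
    using assms by (simp add: Wu Wv)
  ultimately have "inv (word_map lam b u) (word_map lam b v x)
                    = (lam ^ length v * x + av - au) / lam ^ length u"
    by (metis inv_f_f)
  then show ?thesis
    by (simp only: au_def av_def)
qed

section \<open>Attractors\<close>

lemma is_attractorD:
  assumes "is_attractor lam t I F"
  shows "compact F" "F \<noteq> {}" "F = (\<Union>i\<in>I. hom_map lam (t i) ` F)"
  using assms unfolding is_attractor_def by safe

lemma attractor_memE:
  assumes "F = (\<Union>i\<in>I. hom_map lam (t i) ` F)" and "x \<in> F"
  obtains i where "i \<in> I" "x \<in> hom_map lam (t i) ` F"
proof -
  from assms(2) have "x \<in> (\<Union>i\<in>I. hom_map lam (t i) ` F)"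
    by (subst (asm) assms(1)) assumption
  then show ?thesis
    using that by blast
qed

lemma word_map_image_subset:
  assumes "A = (\<Union>i\<in>I. hom_map lam (t i) ` A)" and "w \<in> lists I"
  shows "word_map lam t w ` A \<subseteq> A"
  using assms(2)
proof (induction w)
  case (Cons i w)
  have "word_map lam t (i # w) ` A = hom_map lam (t i) ` word_map lam t w ` A"
    by (auto simp: hom_map_def image_iff)
  also have "\<dots> \<subseteq> hom_map lam (t i) ` A"
    using Cons by auto
  also have "\<dots> \<subseteq> (\<Union>j\<in>I. hom_map lam (t j) ` A)"
    using Cons.hyps(1) by (rule UN_upper)
  also have "\<dots> = A"
    using assms(1) by simp
  finally show ?case .
qed simp

lemma fst_attractor_invariant:
  assumes "F = (\<Union>i\<in>I. hom_map lam (t i) ` F)" and "w \<in> lists I"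
  shows "word_map lam (\<lambda>i. fst (t i)) w ` fst ` F \<subseteq> fst ` F"
proof
  fix y
  assume "y \<in> word_map lam (\<lambda>i. fst (t i)) w ` fst ` F"
  then obtain z where "z \<in> F" "y = fst (word_map lam t w z)"
    by (auto simp: fst_word_map)
  then show "y \<in> fst ` F"
    using word_map_image_subset[OF assms] by blast
qed

section \<open>Failure of the weak separation condition\<close>

lemma ex_power_bracket:
  fixes x lam :: real
  assumes "0 < x" "x < 1" "0 < lam" "lam < 1"
  obtains k where "lam ^ Suc k \<le> x" "x < lam ^ k"
proof -
  obtain n where n: "lam ^ n < x"
    using real_arch_pow_inv[OF assms(1,4)] by blast
  have "\<exists>k<n. (\<forall>i\<le>k. \<not> lam ^ i \<le> x) \<and> lam ^ Suc k \<le> x"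
    by (rule ex_least_nat_less) (use n assms in auto)
  then show ?thesis
    using that by (meson order.refl not_le)
qed

lemma power_ratio_far_from_one:
  fixes lam :: real
  assumes "0 < lam" "lam < 1" "p \<noteq> q"
  shows "1 - lam \<le> \<bar>lam ^ q / lam ^ p - 1\<bar>"
proof (cases "p < q")
  case True
  then have "lam ^ q / lam ^ p = lam ^ (q - p)"
    using assms by (simp add: power_diff)
  moreover have "lam ^ (q - p) \<le> lam"
    using True assms power_decreasing[of 1 "q - p" lam] by simp
  ultimately show ?thesis
    by simp
next
  case False
  then have "q < p"
    using assms(3) by simp
  then have "lam ^ q / lam ^ p = 1 / lam ^ (p - q)" and "lam ^ (p - q) \<le> lam"
    using assms power_decreasing[of 1 "p - q" lam] by (simp_all add: power_diff)
  then have "1 / lam \<le> lam ^ q / lam ^ p"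
    using assms by (simp add: frac_le)
  moreover have "1 / lam - 1 - (1 - lam) = (1 - lam)\<^sup>2 / lam"
    using assms by (simp add: field_simps power2_eq_square)
  then have "1 - lam \<le> 1 / lam - 1"
    using assms by (smt (verit) divide_nonneg_pos zero_le_power2)
  ultimately show ?thesis
    by linarith
qed

lemma word_map_quotient_near_id:
  fixes b :: "'i \<Rightarrow> real"
  assumes lam: "0 < lam" "lam < 1" and "d \<le> (1 - lam) / 2"
    and f0: "\<bar>inv (word_map lam b u) (word_map lam b v 0)\<bar> < d"
    and f1: "\<bar>inv (word_map lam b u) (word_map lam b v 1) - 1\<bar> < d"
  obtains c where "\<bar>c\<bar> < d" "\<And>x. inv (word_map lam b u) (word_map lam b v x) = x + c"
    "\<And>x. word_map lam b v x = word_map lam b u (x + c)"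
proof -
  define au av where "au = word_map lam b u 0" and "av = word_map lam b v 0"
  define f where "f x = inv (word_map lam b u) (word_map lam b v x)" for x
  have pos: "lam ^ length u \<noteq> 0"
    using lam by simp
  have f: "f x = (lam ^ length v * x + av - au) / lam ^ length u" for x
    unfolding f_def au_def av_def using lam by (simp add: inv_word_map_word_map_real)
  have "f 1 - f 0 = lam ^ length v / lam ^ length u"
    using pos by (simp add: f field_simps)
  then have "\<bar>lam ^ length v / lam ^ length u - 1\<bar> < 1 - lam"
    using f0 f1 assms(3) unfolding f_def abs_less_iff by auto
  then have same_length: "length u = length v"
    using power_ratio_far_from_one[OF lam, of "length u" "length v"] by linarith
  define c where "c = (av - au) / lam ^ length u"
  have f_shift: "f x = x + c" for x
    using pos by (simp add: f same_length c_def field_simps)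
  moreover have "\<bar>c\<bar> < d"
    using f0 f_shift[of 0] by (simp add: f_def)
  moreover have "word_map lam b v x = word_map lam b u (x + c)" for x
    using pos word_map_real[of lam b u] word_map_real[of lam b v]
    by (simp add: same_length c_def field_simps flip: au_def av_def)
  ultimately show ?thesis
    using that unfolding f_def by blast
qed

lemma not_WSC_imp_small_shift:
  fixes b :: "'i \<Rightarrow> real"
  assumes lam: "0 < lam" "lam < 1" and "\<not> WSC lam b I" and "\<delta> > 0"
  obtains c u v where "0 < c" "c < \<delta>" "u \<in> lists I" "v \<in> lists I"
    "\<And>x. word_map lam b v x = word_map lam b u (x + c)"
proof -
  define S where "S = {inv (word_map lam b u) \<circ> word_map lam b v | u v.
                        u \<in> lists I \<and> v \<in> lists I \<and> u \<noteq> v} - {id}"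
  define d where "d = min \<delta> ((1 - lam) / 2)"
  have d_pos: "0 < d"
    using assms by (simp add: d_def)
  have d_le: "d \<le> \<delta>" "d \<le> (1 - lam) / 2"
    unfolding d_def by (rule min.cobounded1, rule min.cobounded2)
  define U where "U = (\<lambda>f::real \<Rightarrow> real. f 0) -` ball 0 d \<inter> (\<lambda>f. f 1) -` ball 1 d"
  have "open U"
    unfolding U_def by (intro open_Int open_vimage open_ball continuous_on_product_coordinates)
  moreover have "id \<in> U"
    using d_pos by (simp add: U_def)
  moreover have "id \<in> closure S"
    using assms(3) by (simp add: WSC_def S_def)
  ultimately have "S \<inter> U \<noteq> {}"
    unfolding closure_iff_nhds_not_empty by blast
  then obtain u v where uv: "u \<in> lists I" "v \<in> lists I"
    and f_ne_id: "inv (word_map lam b u) \<circ> word_map lam b v \<noteq> id"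
    and f_in_U: "inv (word_map lam b u) \<circ> word_map lam b v \<in> U"
    unfolding S_def by blast
  have "\<bar>inv (word_map lam b u) (word_map lam b v 0)\<bar> < d"
    and "\<bar>inv (word_map lam b u) (word_map lam b v 1) - 1\<bar> < d"
    using f_in_U by (auto simp: U_def dist_real_def)
  then obtain c where c: "\<bar>c\<bar> < d" "\<And>x. inv (word_map lam b u) (word_map lam b v x) = x + c"
    and shift: "\<And>x. word_map lam b v x = word_map lam b u (x + c)"
    using word_map_quotient_near_id[OF lam d_le(2)] by blast
  have "c \<noteq> 0"
    using f_ne_id c(2) by (auto simp: fun_eq_iff)
  show ?thesis
  proof (cases "c > 0")
    case True
    then show ?thesis
      using that[of c u v] c(1) d_le(1) uv shift by simp
  next
    case False
    have "word_map lam b u x = word_map lam b v (x + - c)" for x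
      using shift[of "x - c"] by simp
    then show ?thesis
      using that[of "- c" v u] False \<open>c \<noteq> 0\<close> c(1) d_le(1) uv by simp
  qed
qed

definition gap_chain :: "real \<Rightarrow> real set \<Rightarrow> nat \<Rightarrow> real \<Rightarrow> bool" where
  "gap_chain lam G N r \<longleftrightarrow> (\<exists>x. (\<forall>i\<le>N. x i \<in> G) \<and>
     (\<forall>i<N. lam * r \<le> x (Suc i) - x i \<and> x (Suc i) - x i \<le> r))"

lemma gap_chain_0: "G \<noteq> {} \<Longrightarrow> gap_chain lam G 0 r"
  by (auto simp: gap_chain_def)

lemma gap_chain_Suc:
  assumes "gap_chain lam G N r" and "0 < a"
    and "\<And>y. y \<in> G \<Longrightarrow> a * y + b \<in> G" and "\<And>y. y \<in> G \<Longrightarrow> a * y + b + e \<in> G"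
    and "lam * (a * r) \<le> e" and "e \<le> a * r"
  shows "gap_chain lam G (Suc N) (a * r)"
proof -
  obtain x where x_in: "\<forall>i\<le>N. x i \<in> G"
    and gaps: "\<forall>i<N. lam * r \<le> x (Suc i) - x i \<and> x (Suc i) - x i \<le> r"
    using assms(1) by (auto simp: gap_chain_def)
  define x' where "x' i = (if i \<le> N then a * x i + b else a * x N + b + e)" for i
  have "\<forall>i\<le>Suc N. x' i \<in> G"
    using x_in assms(3,4) by (auto simp: x'_def le_Suc_eq)
  moreover have "lam * (a * r) \<le> x' (Suc i) - x' i \<and> x' (Suc i) - x' i \<le> a * r"
    if "i < Suc N" for i
  proof (cases "i < N")
    case True
    then have "x' (Suc i) - x' i = a * (x (Suc i) - x i)"
      by (simp add: x'_def algebra_simps)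
    with True gaps assms(2) show ?thesis
      by (simp add: mult.left_commute[of lam] mult_left_mono)
  next
    case False
    with that have "i = N"
      by simp
    then have "x' (Suc i) - x' i = e"
      by (simp add: x'_def)
    with assms(5,6) show ?thesis
      by simp
  qed
  ultimately show ?thesis
    unfolding gap_chain_def by blast
qed

lemma gap_chain_Suc_from_shift:
  fixes b :: "'i \<Rightarrow> real" and G :: "real set"
  assumes lam: "0 < lam" "lam < 1" and "I \<noteq> {}"
    and invariant: "\<And>w. w \<in> lists I \<Longrightarrow> word_map lam b w ` G \<subseteq> G"
    and chain: "gap_chain lam G N r" and c: "0 < c" "c < r" and uv: "u \<in> lists I" "v \<in> lists I"
    and shift: "\<And>x. word_map lam b v x = word_map lam b u (x + c)"
  obtains a where "0 < a" "a \<le> 1" "gap_chain lam G (Suc N) (a * r)"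
proof -
  obtain m where m: "lam ^ Suc m \<le> c / r" "c / r < lam ^ m"
    using ex_power_bracket[of "c / r" lam] c lam by auto
  obtain i0 where "i0 \<in> I"
    using assms(3) by blast
  \<comment> \<open>The old chain is mapped by \<open>u @ w\<close>; the image of its last point under \<open>v @ w\<close> lies
    \<open>e\<close> further to the right, and the padding \<open>w\<close> makes \<open>e\<close> a gap of the right size.\<close>
  define w where "w = replicate m i0"
  have w: "w \<in> lists I" "length w = m"
    using \<open>i0 \<in> I\<close> by (auto simp: w_def)
  define a where "a = lam ^ (length u + m)"
  define e where "e = lam ^ length u * c"
  have uw: "word_map lam b (u @ w) y = a * y + word_map lam b (u @ w) 0" for y
    using word_map_real[of lam b "u @ w" y] w(2) by (simp add: a_def)
  have vw: "word_map lam b (v @ w) y = word_map lam b (u @ w) y + e" for y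
    by (simp add: word_map_append shift word_map_real_add e_def)
  have "0 < a" "a \<le> 1"
    using lam by (simp_all add: a_def power_le_one)
  moreover have "gap_chain lam G (Suc N) (a * r)"
  proof (rule gap_chain_Suc[OF chain \<open>0 < a\<close>])
    show "a * y + word_map lam b (u @ w) 0 \<in> G" if "y \<in> G" for y
      using invariant[of "u @ w"] uv w that by (auto simp: uw[symmetric])
    show "a * y + word_map lam b (u @ w) 0 + e \<in> G" if "y \<in> G" for y
      using invariant[of "v @ w"] uv w that by (auto simp: uw[symmetric] vw[symmetric])
    show "lam * (a * r) \<le> e" "e \<le> a * r"
      using m c lam by (simp_all add: a_def e_def power_add field_simps)
  qed
  ultimately show ?thesis
    by (rule that)
qed

lemma gap_chains_at_small_scales:
  fixes b :: "'i \<Rightarrow> real" and G :: "real set"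
  assumes lam: "0 < lam" "lam < 1" and "\<not> WSC lam b I" and "I \<noteq> {}" and "G \<noteq> {}"
    and invariant: "\<And>w. w \<in> lists I \<Longrightarrow> word_map lam b w ` G \<subseteq> G"
    and "0 < r0"
  shows "\<exists>r. 0 < r \<and> r \<le> r0 \<and> gap_chain lam G N r"
proof (induction N)
  case 0
  show ?case
    using assms gap_chain_0 by blast
next
  case (Suc N)
  then obtain r where r: "0 < r" "r \<le> r0" "gap_chain lam G N r"
    by blast
  obtain c u v where "0 < c" "c < r" "u \<in> lists I" "v \<in> lists I"
    and "\<And>x. word_map lam b v x = word_map lam b u (x + c)"
    using not_WSC_imp_small_shift[OF lam assms(3) r(1)] by blast
  then obtain a where a: "0 < a" "a \<le> 1" "gap_chain lam G (Suc N) (a * r)"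
    using gap_chain_Suc_from_shift[OF lam assms(4) invariant r(3)] by blast
  have "a * r \<le> r"
    using a r(1) by (simp add: mult_left_le_one_le)
  then have "a * r \<le> r0"
    using r(2) by (rule order_trans)
  then show ?case
    using a r(1) by (intro exI[of _ "a * r"]) simp
qed

section \<open>Chains in a strongly separated attractor\<close>

definition pieces_separated :: "real \<Rightarrow> ('i \<Rightarrow> 'a::real_normed_vector) \<Rightarrow> 'i set \<Rightarrow> 'a set \<Rightarrow> real \<Rightarrow> bool"
  where "pieces_separated lam t I F d \<longleftrightarrow> (\<forall>i\<in>I. \<forall>j\<in>I. i \<noteq> j \<longrightarrow>
     (\<forall>p\<in>hom_map lam (t i) ` F. \<forall>q\<in>hom_map lam (t j) ` F. d \<le> dist p q))"

lemma SSC_imp_pieces_separated: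
  fixes t :: "'i \<Rightarrow> 'a::euclidean_space"
  assumes "finite I" and "compact F" and "SSC lam t I F"
  obtains d where "0 < d" "pieces_separated lam t I F d"
proof (cases "F = {}")
  case True
  then show ?thesis
    using that[of 1] by (simp add: pieces_separated_def)
next
  case False
  define piece where "piece i = hom_map lam (t i) ` F" for i
  have compact_piece: "compact (piece i)" for i
    unfolding piece_def using assms(2)
    by (intro compact_continuous_image) (auto simp: hom_map_def intro!: continuous_intros)
  have setdist_pos: "0 < setdist (piece i) (piece j)" if "i \<in> I" "j \<in> I" "i \<noteq> j" for i j
  proof -
    have "piece i \<inter> piece j = {}"
      using assms(3) that by (simp add: SSC_def piece_def)
    moreover have "piece i \<noteq> {}" "piece j \<noteq> {}"
      using False by (simp_all add: piece_def)
    ultimately show ?thesis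
      by (simp add: setdist_gt_0_compact_closed compact_piece compact_imp_closed)
  qed
  define D where "D = (\<lambda>(i, j). setdist (piece i) (piece j)) ` (I \<times> I - Id)"
  define d where "d = Min (insert 1 D)"
  have "finite D"
    unfolding D_def using assms(1) by simp
  have "0 < d"
    unfolding d_def using \<open>finite D\<close> setdist_pos by (subst Min_gr_iff) (auto simp: D_def)
  moreover have "d \<le> dist p q"
    if "i \<in> I" "j \<in> I" "i \<noteq> j"
      and "p \<in> hom_map lam (t i) ` F" "q \<in> hom_map lam (t j) ` F" for i j p q
  proof -
    have "d \<le> setdist (piece i) (piece j)"
      unfolding d_def using \<open>finite D\<close> that(1-3) by (intro Min_le) (auto simp: D_def)
    also have "\<dots> \<le> dist p q"
      using that(4,5) unfolding piece_def by (rule setdist_le_dist)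
    finally show ?thesis .
  qed
  then have "pieces_separated lam t I F d"
    unfolding pieces_separated_def by blast
  ultimately show ?thesis
    by (rule that)
qed

lemma pieces_separatedD:
  assumes "pieces_separated lam t I F d" and "i \<in> I" "j \<in> I" "i \<noteq> j"
    and "p \<in> hom_map lam (t i) ` F" "q \<in> hom_map lam (t j) ` F"
  shows "d \<le> dist p q"
  using assms(1)[unfolded pieces_separated_def, rule_format, OF assms(2-6)] .

lemma fine_chain_in_one_piece:
  fixes t :: "'i \<Rightarrow> 'a::real_normed_vector"
  assumes attr: "F = (\<Union>i\<in>I. hom_map lam (t i) ` F)" and sep: "pieces_separated lam t I F d"
    and in_F: "\<forall>i\<le>N. p i \<in> F" and steps: "\<forall>i<N. dist (p i) (p (Suc i)) < d"
  obtains j where "j \<in> I" "\<forall>i\<le>N. p i \<in> hom_map lam (t j) ` F"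
proof -
  obtain j where j: "j \<in> I" "p 0 \<in> hom_map lam (t j) ` F"
    using attractor_memE[OF attr] in_F by blast
  have "p i \<in> hom_map lam (t j) ` F" if "i \<le> N" for i
    using that
  proof (induction i)
    case (Suc i)
    obtain j' where j': "j' \<in> I" "p (Suc i) \<in> hom_map lam (t j') ` F"
      using attractor_memE[OF attr] in_F Suc.prems by blast
    have "j' = j"
    proof (rule ccontr)
      assume "j' \<noteq> j"
      moreover have "p i \<in> hom_map lam (t j) ` F"
        using Suc by simp
      ultimately have "d \<le> dist (p i) (p (Suc i))"
        using pieces_separatedD[OF sep j(1) j'(1)] j'(2) by simp
      moreover have "dist (p i) (p (Suc i)) < d"
        using steps Suc_le_lessD[OF Suc.prems] by blast
      ultimately show False
        by linarith
    qed
    then show ?case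
      using j' by simp
  qed (use j in simp)
  then show ?thesis
    using that j(1) by blast
qed

lemma fine_chain_rescale:
  fixes t :: "'i \<Rightarrow> 'a::real_normed_vector"
  assumes "0 < lam" and "F = (\<Union>i\<in>I. hom_map lam (t i) ` F)"
    and "pieces_separated lam t I F d"
    and "\<forall>i\<le>N. p i \<in> F" and "\<forall>i<N. dist (p i) (p (Suc i)) < d"
  obtains q where "\<forall>i\<le>N. q i \<in> F" "\<And>i j. dist (p i) (p j) = lam * dist (q i) (q j)"
proof -
  obtain j where j: "\<forall>i\<le>N. p i \<in> hom_map lam (t j) ` F"
    using fine_chain_in_one_piece[OF assms(2-5)] by blast
  define q where "q i = (1 / lam) *\<^sub>R (p i - t j)" for i
  have "\<forall>i\<le>N. q i \<in> F"
    using j assms(1) by (auto simp: q_def hom_map_def)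
  moreover have "dist (p i) (p i') = lam * dist (q i) (q i')" for i i'
  proof -
    have "q i - q i' = (1 / lam) *\<^sub>R (p i - p i')"
      by (simp add: q_def algebra_simps)
    then show ?thesis
      using assms(1) by (simp add: dist_norm)
  qed
  ultimately show ?thesis
    using that by blast
qed

lemma fine_chain_dist_le:
  fixes t :: "'i \<Rightarrow> 'a::real_normed_vector"
  assumes lam: "0 < lam" "lam < 1" and "0 < d" and "bounded F"
    and attr: "F = (\<Union>i\<in>I. hom_map lam (t i) ` F)" and sep: "pieces_separated lam t I F d"
    and "\<forall>i\<le>N. p i \<in> F" and "\<forall>i<N. dist (p i) (p (Suc i)) < d * lam ^ k"
  shows "dist (p 0) (p N) \<le> lam ^ Suc k * diameter F"
  \<comment> \<open>Steps below \<open>d * lam ^ k\<close> keep the chain inside one cylinder of level \<open>Suc k\<close>.\<close>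
  using assms(7,8)
proof (induction k arbitrary: p)
  case 0
  then obtain q where q: "\<forall>i\<le>N. q i \<in> F" "\<And>i j. dist (p i) (p j) = lam * dist (q i) (q j)"
    using fine_chain_rescale[OF lam(1) attr sep, of N p] by auto
  then show ?case
    using lam \<open>bounded F\<close> by (simp add: diameter_bounded_bound)
next
  case (Suc k)
  have "lam ^ Suc k \<le> 1"
    using lam by (intro power_le_one) auto
  then have "d * lam ^ Suc k \<le> d"
    using lam \<open>0 < d\<close> by (simp add: mult_right_le_one_le)
  then have "\<forall>i<N. dist (p i) (p (Suc i)) < d"
    using Suc.prems(2) by (auto intro: less_le_trans)
  then obtain q where q: "\<forall>i\<le>N. q i \<in> F" "\<And>i j. dist (p i) (p j) = lam * dist (q i) (q j)"
    using fine_chain_rescale[OF lam(1) attr sep Suc.prems(1)] by blast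
  have "\<forall>i<N. dist (q i) (q (Suc i)) < d * lam ^ k"
    using Suc.prems(2) lam by (simp add: q(2) mult.left_commute[of lam])
  then have "dist (q 0) (q N) \<le> lam ^ Suc k * diameter F"
    using Suc.IH q(1) by blast
  then show ?case
    using lam by (simp add: q(2))
qed

lemma fine_chain_dist_le_ratio:
  fixes t :: "'i \<Rightarrow> 'a::real_normed_vector"
  assumes lam: "0 < lam" "lam < 1" and "bounded F"
    and attr: "F = (\<Union>i\<in>I. hom_map lam (t i) ` F)" and sep: "pieces_separated lam t I F d"
    and "0 < \<rho>" "\<rho> < d"
    and "\<forall>i\<le>N. p i \<in> F" and "\<forall>i<N. dist (p i) (p (Suc i)) \<le> \<rho>"
  shows "dist (p 0) (p N) \<le> \<rho> / d * diameter F"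
proof -
  obtain k where k: "lam ^ Suc k \<le> \<rho> / d" "\<rho> / d < lam ^ k"
    using ex_power_bracket[of "\<rho> / d" lam] assms(6,7) lam by auto
  have "\<forall>i<N. dist (p i) (p (Suc i)) < d * lam ^ k"
    using assms(6,7,9) k(2) by (auto simp: divide_less_eq mult.commute intro: le_less_trans)
  then have "dist (p 0) (p N) \<le> lam ^ Suc k * diameter F"
    using fine_chain_dist_le[OF lam _ \<open>bounded F\<close> attr sep] assms(6,7,8) by auto
  also have "\<dots> \<le> \<rho> / d * diameter F"
    using k(1) \<open>bounded F\<close> by (intro mult_right_mono) (auto simp: diameter_ge_0)
  finally show ?thesis .
qed

lemma telescoping_lower_bound:
  fixes x :: "nat \<Rightarrow> real"
  shows "\<forall>i<N. a \<le> x (Suc i) - x i \<Longrightarrow> x 0 + real N * a \<le> x N"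
  by (induction N) (auto simp: algebra_simps)

lemma dist_scaleR_Pair_0:
  fixes s :: "real \<times> 'a::real_normed_vector"
  assumes "0 \<le> \<gamma>"
  shows "dist (\<gamma> *\<^sub>R (x, 0) + s) (\<gamma> *\<^sub>R (y, 0) + s) = \<gamma> * \<bar>x - y\<bar>"
proof -
  have "(\<gamma> *\<^sub>R (x, 0) + s) - (\<gamma> *\<^sub>R (y, 0) + s) = (\<gamma> * (x - y), 0)"
    by (simp add: prod_eq_iff algebra_simps)
  then show ?thesis
    using assms by (simp add: dist_norm abs_mult)
qed

lemma embedded_gap_chain_length_le:
  fixes t :: "'i \<Rightarrow> 'a::real_normed_vector" and e :: "real \<Rightarrow> 'a"
  assumes lam: "0 < lam" "lam < 1" and "bounded F"
    and attr: "F = (\<Union>i\<in>I. hom_map lam (t i) ` F)" and sep: "pieces_separated lam t I F d"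
    and "0 < \<gamma>" and e_dist: "\<And>x y. dist (e x) (e y) = \<gamma> * \<bar>x - y\<bar>" and "e ` G \<subseteq> F"
    and "gap_chain lam G N r" and "0 < r" and "\<gamma> * r < d"
  shows "real N * lam * d \<le> diameter F"
proof -
  obtain x where x_in: "\<forall>i\<le>N. x i \<in> G"
    and gaps: "\<forall>i<N. lam * r \<le> x (Suc i) - x i \<and> x (Suc i) - x i \<le> r"
    using assms(9) by (auto simp: gap_chain_def)
  have "dist (e (x i)) (e (x (Suc i))) \<le> \<gamma> * r" if "i < N" for i
  proof -
    have "0 \<le> lam * r" "lam * r \<le> x (Suc i) - x i" "x (Suc i) - x i \<le> r"
      using gaps that lam \<open>0 < r\<close> by auto
    then have "\<bar>x i - x (Suc i)\<bar> \<le> r"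
      unfolding abs_le_iff by linarith
    then show ?thesis
      using \<open>0 < \<gamma>\<close> by (simp add: e_dist)
  qed
  then have "dist (e (x 0)) (e (x N)) \<le> \<gamma> * r / d * diameter F"
    using fine_chain_dist_le_ratio[OF lam \<open>bounded F\<close> attr sep, of "\<gamma> * r" N "\<lambda>i. e (x i)"]
      x_in \<open>e ` G \<subseteq> F\<close> \<open>0 < r\<close> \<open>0 < \<gamma>\<close> \<open>\<gamma> * r < d\<close> by auto
  moreover have "\<gamma> * (real N * (lam * r)) \<le> dist (e (x 0)) (e (x N))"
  proof -
    have "x 0 + real N * (lam * r) \<le> x N"
      using gaps by (intro telescoping_lower_bound) auto
    then show ?thesis
      using \<open>0 < \<gamma>\<close> by (simp add: e_dist)
  qed
  ultimately have "(\<gamma> * r) * (real N * lam) \<le> (\<gamma> * r) * (diameter F / d)"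
    by (simp add: algebra_simps)
  moreover have "0 < \<gamma> * r"
    using \<open>0 < r\<close> \<open>0 < \<gamma>\<close> by simp
  ultimately have "real N * lam \<le> diameter F / d"
    by (rule mult_left_le_imp_le)
  moreover have "0 < d"
    using \<open>0 < r\<close> \<open>0 < \<gamma>\<close> \<open>\<gamma> * r < d\<close> by (smt (verit) mult_pos_pos)
  ultimately show ?thesis
    by (simp add: pos_le_divide_eq)
qed

theorem lemma6p6:
  fixes I :: "'i set" and t :: "'i \<Rightarrow> real \<times> real" and lam :: real
    and F :: "(real \<times> real) set" and \<gamma> :: real and s :: "real \<times> real"
  assumes "finite I" and "I \<noteq> {}"
    and "0 < lam" and "lam < 1"
    and "is_attractor lam t I F"
    and "SSC lam t I F"
    and "\<not> (\<exists>L. affine L \<and> aff_dim L = 1 \<and> F \<subseteq> L)"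
    and "\<gamma> > 0"
    and "(\<lambda>x. \<gamma> *\<^sub>R (x, 0) + s) ` (fst ` F) \<subseteq> F"
  shows "WSC lam (\<lambda>i. fst (t i)) I"
proof (rule ccontr)
  assume not_WSC: "\<not> WSC lam (\<lambda>i. fst (t i)) I"
  note attr = is_attractorD(3)[OF assms(5)]
  have "compact F" "F \<noteq> {}"
    using is_attractorD(1,2)[OF assms(5)] .
  obtain d where "0 < d" and sep: "pieces_separated lam t I F d"
    using SSC_imp_pieces_separated[OF assms(1) \<open>compact F\<close> assms(6)] .
  obtain N :: nat where N: "diameter F / (d * lam) < N"
    using reals_Archimedean2 by blast
  have "fst ` F \<noteq> {}" "0 < d / (2 * \<gamma>)"
    using \<open>F \<noteq> {}\<close> \<open>0 < d\<close> assms(8) by auto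
  then obtain r where r: "0 < r" "r \<le> d / (2 * \<gamma>)" "gap_chain lam (fst ` F) N r"
    using gap_chains_at_small_scales[OF assms(3,4) not_WSC assms(2) _ fst_attractor_invariant[OF attr],
        where N = N]
    by blast
  have "\<gamma> * r < d"
    using r(2) \<open>0 < d\<close> assms(8) by (simp add: field_simps)
  have "real N * lam * d \<le> diameter F"
    using assms(8)
    by (intro embedded_gap_chain_length_le[OF assms(3,4) compact_imp_bounded[OF \<open>compact F\<close>]
          attr sep assms(8) dist_scaleR_Pair_0 assms(9) r(3,1) \<open>\<gamma> * r < d\<close>]) simp
  with N \<open>0 < d\<close> assms(3) show False
    by (simp add: pos_divide_less_eq ac_simps)
qed

end
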